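(* Let $(X,\mathcal U)$ be a non-archimedean uniform space. For every $n\in\mathbb N$, the set $B_n$ of all elements of $A(X)$ of length at most $n$ is closed in $A_{NA}(X,\mathcal U)$.
   Context: A uniform space is non-archimedean if its (Hausdorff) uniformity has a base of equivalence relations. $A_{NA}(X,\mathcal U)$ is the free abelian non-archimedean group of $(X,\mathcal U)$: the abelian Hausdorff group with a local base at $0$ of open subgroups, realized on the free abelian group $A(X)$, such that every uniformly continuous map from $X$ into an abelian non-archimedean group extends uniquely to a continuous homomorphism. The length of a nonzero $w=\sum_{i=1}^n k_ix_i\in A(X)$ (distinct $x_i\in X$, $k_i\in\mathbb Z\setminus\{0\}$) is $\sum_i|k_i|$; the length of $0$ is $0$. *)

theory Defs
  imports "HOL-Analysis.Analysis" "HOL-Library.Poly_Mapping"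
begin

text \<open>The uniform space X is the whole type 'a; a uniformity is a set of entourages.\<close>

definition uniformity :: "('a \<times> 'a) set set \<Rightarrow> bool" where
  "uniformity \<U> \<longleftrightarrow> \<U> \<noteq> {}
     \<and> (\<forall>U\<in>\<U>. Id \<subseteq> U)
     \<and> (\<forall>U\<in>\<U>. \<forall>V. U \<subseteq> V \<longrightarrow> V \<in> \<U>)
     \<and> (\<forall>U\<in>\<U>. \<forall>V\<in>\<U>. U \<inter> V \<in> \<U>)
     \<and> (\<forall>U\<in>\<U>. U\<inverse> \<in> \<U>)
     \<and> (\<forall>U\<in>\<U>. \<exists>V\<in>\<U>. V O V \<subseteq> U)"

definition hausdorff_uniformity :: "('a \<times> 'a) set set \<Rightarrow> bool" where
  "hausdorff_uniformity \<U> \<longleftrightarrow> uniformity \<U> \<and> \<Inter>\<U> = Id"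

definition non_archimedean_uniformity :: "('a \<times> 'a) set set \<Rightarrow> bool" where
  "non_archimedean_uniformity \<U> \<longleftrightarrow> hausdorff_uniformity \<U>
     \<and> (\<forall>U\<in>\<U>. \<exists>E\<in>\<U>. equiv UNIV E \<and> E \<subseteq> U)"

text \<open>The free abelian group A(X) is realised as finitely supported maps (poly_mapping) to int; x is identified with single x 1.\<close>
abbreviation gen :: "'a \<Rightarrow> ('a \<Rightarrow>\<^sub>0 int)" where
  "gen x \<equiv> Poly_Mapping.single x 1"

definition word_length :: "('a \<Rightarrow>\<^sub>0 int) \<Rightarrow> nat" where
  "word_length w = (\<Sum>x\<in>Poly_Mapping.keys w. nat \<bar>Poly_Mapping.lookup w x\<bar>)"

definition is_subgroup :: "('a \<Rightarrow>\<^sub>0 int) set \<Rightarrow> bool" where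
  "is_subgroup H \<longleftrightarrow> 0 \<in> H \<and> (\<forall>a\<in>H. \<forall>b\<in>H. a - b \<in> H)"

text \<open>Topology of A_NA(X,U): the finest group topology on A(X) with a base at 0 of
  open subgroups such that x \<mapsto> gen x is uniformly continuous.\<close>
definition free_na_open :: "('a \<times> 'a) set set \<Rightarrow> ('a \<Rightarrow>\<^sub>0 int) set \<Rightarrow> bool" where
  "free_na_open \<U> W \<longleftrightarrow>
     (\<forall>w\<in>W. \<exists>H. is_subgroup H \<and> {(x, y). gen x - gen y \<in> H} \<in> \<U>
                 \<and> (\<lambda>h. w + h) ` H \<subseteq> W)"

definition A_NA_topology :: "('a \<times> 'a) set set \<Rightarrow> ('a \<Rightarrow>\<^sub>0 int) topology" where
  "A_NA_topology \<U> = topology (free_na_open \<U>)"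

end

theory Submission
  imports Defs
begin

text \<open>Let w have length > n.  Choose an equivalence entourage E separating the finitely many
  points of the support of w, and let H be the subgroup of words whose coefficients add up to 0
  on every E-class.  H is a basic neighbourhood of 0, since gen x - gen y \<in> H whenever (x, y) \<in> E.
  For h \<in> H, summing the coefficients of w + h over the E-class of a support point s of w gives
  back the coefficient of s in w; as the classes are disjoint, w + h is at least as long as w.
  So w + H misses the set of words of length \<le> n, whose complement is therefore open.\<close>

lemma uniformity_upward_closed:
  assumes "uniformity \<U>" "U \<in> \<U>" "U \<subseteq> V"
  shows "V \<in> \<U>"
proof -
  have "\<forall>U\<in>\<U>. \<forall>V. U \<subseteq> V \<longrightarrow> V \<in> \<U>"
    using assms(1) by (simp add: uniformity_def)
  with assms(2,3) show ?thesis by blast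
qed

lemma uniformity_Int:
  assumes "uniformity \<U>" "U \<in> \<U>" "V \<in> \<U>"
  shows "U \<inter> V \<in> \<U>"
proof -
  have "\<forall>U\<in>\<U>. \<forall>V\<in>\<U>. U \<inter> V \<in> \<U>"
    using assms(1) by (simp add: uniformity_def)
  with assms(2,3) show ?thesis by blast
qed

lemma uniformity_UNIV:
  assumes "uniformity \<U>"
  shows "UNIV \<in> \<U>"
proof -
  obtain U where "U \<in> \<U>"
    using assms by (auto simp: uniformity_def)
  then show ?thesis
    using uniformity_upward_closed[OF assms] by blast
qed

lemma uniformity_Inter_finite:
  assumes U: "uniformity \<U>" and "finite F" "F \<subseteq> \<U>"
  shows "\<Inter>F \<in> \<U>"
  using assms(2,3)
  by (induction F rule: finite_induct) (auto simp: uniformity_UNIV[OF U] uniformity_Int[OF U])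

lemma non_archimedean_uniformity_imp_uniformity:
  "non_archimedean_uniformity \<U> \<Longrightarrow> uniformity \<U>"
  unfolding non_archimedean_uniformity_def hausdorff_uniformity_def by simp

lemma non_archimedean_separating_equiv:
  assumes NA: "non_archimedean_uniformity \<U>" and fin: "finite S"
  obtains E where "E \<in> \<U>" "equiv UNIV E" "\<And>s t. s \<in> S \<Longrightarrow> t \<in> S \<Longrightarrow> (s, t) \<in> E \<Longrightarrow> s = t"
proof -
  have U: "uniformity \<U>"
    using NA by (rule non_archimedean_uniformity_imp_uniformity)
  have Id: "\<Inter>\<U> = Id"
    using NA unfolding non_archimedean_uniformity_def hausdorff_uniformity_def by (elim conjE)
  let ?P = "{p \<in> S \<times> S. fst p \<noteq> snd p}"
  have "\<forall>p\<in>?P. \<exists>V. V \<in> \<U> \<and> p \<notin> V"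
  proof
    fix p assume "p \<in> ?P"
    then have "p \<notin> \<Inter>\<U>"
      unfolding Id by (cases p) auto
    then show "\<exists>V. V \<in> \<U> \<and> p \<notin> V"
      by blast
  qed
  from bchoice[OF this] obtain V where V: "\<forall>p\<in>?P. V p \<in> \<U> \<and> p \<notin> V p"
    by blast
  have "finite ?P"
    by (rule finite_subset[of _ "S \<times> S"]) (use fin in auto)
  then have "\<Inter>(V ` ?P) \<in> \<U>"
    using V by (intro uniformity_Inter_finite[OF U]) auto
  then obtain E where E: "E \<in> \<U>" "equiv UNIV E" "E \<subseteq> \<Inter>(V ` ?P)"
    using NA unfolding non_archimedean_uniformity_def by blast
  have "s = t" if "s \<in> S" "t \<in> S" "(s, t) \<in> E" for s t
  proof (rule ccontr)
    assume "s \<noteq> t"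
    then have "(s, t) \<in> ?P" using that(1,2) by simp
    with V E(3) that(3) show False by blast
  qed
  with E(1,2) show thesis by (rule that)
qed

lemma istopology_free_na_open:
  assumes U: "uniformity \<U>"
  shows "istopology (free_na_open \<U>)"
  unfolding istopology_def
proof (intro conjI allI impI)
  fix S T assume S: "free_na_open \<U> S" and T: "free_na_open \<U> T"
  show "free_na_open \<U> (S \<inter> T)"
    unfolding free_na_open_def
  proof
    fix w assume w: "w \<in> S \<inter> T"
    obtain H1 where H1: "is_subgroup H1" "{(x, y). gen x - gen y \<in> H1} \<in> \<U>" "(\<lambda>h. w + h) ` H1 \<subseteq> S"
      using S w unfolding free_na_open_def by blast
    obtain H2 where H2: "is_subgroup H2" "{(x, y). gen x - gen y \<in> H2} \<in> \<U>" "(\<lambda>h. w + h) ` H2 \<subseteq> T"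
      using T w unfolding free_na_open_def by blast
    have "{(x, y). gen x - gen y \<in> H1 \<inter> H2} = {(x, y). gen x - gen y \<in> H1} \<inter> {(x, y). gen x - gen y \<in> H2}"
      by auto
    then have "{(x, y). gen x - gen y \<in> H1 \<inter> H2} \<in> \<U>"
      using uniformity_Int[OF U H1(2) H2(2)] by simp
    moreover have "is_subgroup (H1 \<inter> H2)"
      using H1(1) H2(1) unfolding is_subgroup_def by auto
    moreover have "(\<lambda>h. w + h) ` (H1 \<inter> H2) \<subseteq> S \<inter> T"
      using H1(3) H2(3) by auto
    ultimately show "\<exists>H. is_subgroup H \<and> {(x, y). gen x - gen y \<in> H} \<in> \<U> \<and> (\<lambda>h. w + h) ` H \<subseteq> S \<inter> T"
      by blast
  qed
next
  fix \<K> assume \<K>: "\<forall>K\<in>\<K>. free_na_open \<U> K"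
  show "free_na_open \<U> (\<Union>\<K>)"
    unfolding free_na_open_def
  proof
    fix w assume "w \<in> \<Union>\<K>"
    then obtain K where "K \<in> \<K>" "w \<in> K" by blast
    then obtain H where "is_subgroup H" "{(x, y). gen x - gen y \<in> H} \<in> \<U>" "(\<lambda>h. w + h) ` H \<subseteq> K"
      using \<K> unfolding free_na_open_def by blast
    with \<open>K \<in> \<K>\<close> show "\<exists>H. is_subgroup H \<and> {(x, y). gen x - gen y \<in> H} \<in> \<U> \<and> (\<lambda>h. w + h) ` H \<subseteq> \<Union>\<K>"
      by blast
  qed
qed

lemma openin_A_NA_topology:
  "uniformity \<U> \<Longrightarrow> openin (A_NA_topology \<U>) = free_na_open \<U>"
  unfolding A_NA_topology_def by (simp add: istopology_free_na_open)

lemma topspace_A_NA_topology: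
  assumes U: "uniformity \<U>"
  shows "topspace (A_NA_topology \<U>) = UNIV"
proof -
  have "is_subgroup UNIV"
    by (simp add: is_subgroup_def)
  then have "free_na_open \<U> UNIV"
    using uniformity_UNIV[OF U] unfolding free_na_open_def by auto
  then show ?thesis
    unfolding topspace_def openin_A_NA_topology[OF U] by blast
qed

definition coeff_sum :: "'a set \<Rightarrow> ('a \<Rightarrow>\<^sub>0 int) \<Rightarrow> int" where
  "coeff_sum C v = (\<Sum>x\<in>Poly_Mapping.keys v \<inter> C. Poly_Mapping.lookup v x)"

lemma coeff_sum_superset_keys:
  assumes "finite K" "Poly_Mapping.keys v \<subseteq> K"
  shows "coeff_sum C v = (\<Sum>x\<in>K \<inter> C. Poly_Mapping.lookup v x)"
  unfolding coeff_sum_def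
  by (rule sum.mono_neutral_left) (use assms in \<open>auto simp: in_keys_iff\<close>)

lemma coeff_sum_add: "coeff_sum C (a + b) = coeff_sum C a + coeff_sum C b"
proof -
  let ?K = "Poly_Mapping.keys a \<union> Poly_Mapping.keys b"
  have "finite ?K" by simp
  moreover have "Poly_Mapping.keys (a + b) \<subseteq> ?K"
    using keys_add[of a b] .
  ultimately show ?thesis
    by (simp add: coeff_sum_superset_keys[of ?K] lookup_add sum.distrib)
qed

lemma coeff_sum_diff: "coeff_sum C (a - b) = coeff_sum C a - coeff_sum C b"
  using coeff_sum_add[of C a "- b"] by (simp add: coeff_sum_def sum_negf)

lemma coeff_sum_zero [simp]: "coeff_sum C 0 = 0"
  by (simp add: coeff_sum_def)

lemma coeff_sum_gen: "coeff_sum C (gen x) = (if x \<in> C then 1 else 0)"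
  by (simp add: coeff_sum_def lookup_single)

lemma int_word_length:
  "int (word_length v) = (\<Sum>x\<in>Poly_Mapping.keys v. \<bar>Poly_Mapping.lookup v x\<bar>)"
  unfolding word_length_def by (simp add: of_nat_sum)

lemma sum_abs_coeff_sum_le_word_length:
  assumes "finite S" "disjoint_family_on C S"
  shows "(\<Sum>s\<in>S. \<bar>coeff_sum (C s) v\<bar>) \<le> int (word_length v)"
proof -
  let ?a = "\<lambda>x. \<bar>Poly_Mapping.lookup v x\<bar>"
  have "(\<Sum>s\<in>S. \<bar>coeff_sum (C s) v\<bar>) \<le> (\<Sum>s\<in>S. \<Sum>x\<in>Poly_Mapping.keys v \<inter> C s. ?a x)"
    unfolding coeff_sum_def by (intro sum_mono sum_abs)
  also have "\<dots> = (\<Sum>x\<in>(\<Union>s\<in>S. Poly_Mapping.keys v \<inter> C s). ?a x)"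
    using assms by (intro sum.UNION_disjoint_family[symmetric]) (auto simp: disjoint_family_on_def)
  also have "\<dots> \<le> (\<Sum>x\<in>Poly_Mapping.keys v. ?a x)"
    by (rule sum_mono2) auto
  also have "\<dots> = int (word_length v)"
    by (rule int_word_length[symmetric])
  finally show ?thesis .
qed

definition class_kernel :: "('a \<times> 'a) set \<Rightarrow> ('a \<Rightarrow>\<^sub>0 int) set" where
  "class_kernel E = {v. \<forall>z. coeff_sum (E `` {z}) v = 0}"

lemma is_subgroup_class_kernel: "is_subgroup (class_kernel E)"
  unfolding is_subgroup_def class_kernel_def by (simp add: coeff_sum_diff)

lemma gen_diff_in_class_kernel:
  assumes "equiv UNIV E" "(x, y) \<in> E"
  shows "gen x - gen y \<in> class_kernel E"
proof -
  have "(z, x) \<in> E \<longleftrightarrow> (z, y) \<in> E" for z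
    using assms unfolding equiv_def by (meson symE transE)
  then show ?thesis
    unfolding class_kernel_def by (simp add: coeff_sum_diff coeff_sum_gen Image_singleton)
qed

lemma word_length_le_add_class_kernel:
  assumes E: "equiv UNIV E"
    and sep: "\<And>s t. s \<in> Poly_Mapping.keys w \<Longrightarrow> t \<in> Poly_Mapping.keys w \<Longrightarrow> (s, t) \<in> E \<Longrightarrow> s = t"
    and h: "h \<in> class_kernel E"
  shows "word_length w \<le> word_length (w + h)"
proof -
  let ?S = "Poly_Mapping.keys w" and ?C = "\<lambda>s. E `` {s}"
  have "coeff_sum (?C s) (w + h) = Poly_Mapping.lookup w s" if s: "s \<in> ?S" for s
  proof -
    have "?S \<inter> ?C s = {s}"
      using sep s E unfolding equiv_def refl_on_def by (auto dest: symD)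
    then have "coeff_sum (?C s) w = Poly_Mapping.lookup w s"
      by (simp add: coeff_sum_def)
    moreover have "coeff_sum (?C s) h = 0"
      using h by (simp add: class_kernel_def)
    ultimately show ?thesis
      by (simp add: coeff_sum_add)
  qed
  moreover have "disjoint_family_on ?C ?S"
    unfolding disjoint_family_on_def
  proof (intro ballI impI)
    fix s t assume "s \<in> ?S" "t \<in> ?S" "s \<noteq> t"
    then have "(s, t) \<notin> E" using sep by blast
    then show "?C s \<inter> ?C t = {}"
      using E unfolding equiv_def by (auto dest: symD transD)
  qed
  then have "(\<Sum>s\<in>?S. \<bar>coeff_sum (?C s) (w + h)\<bar>) \<le> int (word_length (w + h))"
    by (intro sum_abs_coeff_sum_le_word_length) simp
  ultimately show ?thesis
    by (simp add: int_word_length[of w, symmetric])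
qed

lemma free_na_open_word_length_gt:
  fixes \<U> :: "('a \<times> 'a) set set"
  assumes NA: "non_archimedean_uniformity \<U>"
  shows "free_na_open \<U> {w. n < word_length w}"
  unfolding free_na_open_def
proof
  fix w :: "'a \<Rightarrow>\<^sub>0 int"
  assume w: "w \<in> {w. n < word_length w}"
  obtain E where E: "E \<in> \<U>" "equiv UNIV E"
    and sep: "\<And>s t. s \<in> Poly_Mapping.keys w \<Longrightarrow> t \<in> Poly_Mapping.keys w \<Longrightarrow> (s, t) \<in> E \<Longrightarrow> s = t"
    using non_archimedean_separating_equiv[OF NA finite_keys] by blast
  have "E \<subseteq> {(x, y). gen x - gen y \<in> class_kernel E}"
    using gen_diff_in_class_kernel[OF E(2)] by blast
  then have "{(x, y). gen x - gen y \<in> class_kernel E} \<in> \<U>"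
    using uniformity_upward_closed[OF non_archimedean_uniformity_imp_uniformity[OF NA] E(1)] by blast
  moreover have "(\<lambda>h. w + h) ` class_kernel E \<subseteq> {w. n < word_length w}"
    using w word_length_le_add_class_kernel[OF E(2) sep] by (auto intro: less_le_trans)
  ultimately show "\<exists>H. is_subgroup H \<and> {(x, y). gen x - gen y \<in> H} \<in> \<U>
                       \<and> (\<lambda>h. w + h) ` H \<subseteq> {w. n < word_length w}"
    using is_subgroup_class_kernel by blast
qed

theorem lemma4p19:
  fixes \<U> :: "('a \<times> 'a) set set" and n :: nat
  assumes "non_archimedean_uniformity \<U>"
  shows "closedin (A_NA_topology \<U>) {w. word_length w \<le> n}"
proof -
  have U: "uniformity \<U>"
    using assms by (rule non_archimedean_uniformity_imp_uniformity)
  have "openin (A_NA_topology \<U>) (UNIV - {w. word_length w \<le> n})"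
    using free_na_open_word_length_gt[OF assms, of n]
    by (simp add: openin_A_NA_topology[OF U] set_diff_eq not_le)
  then show ?thesis
    unfolding closedin_def topspace_A_NA_topology[OF U] by simp
qed

end
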